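(* Let $n\ge 1$ and let $\mathbf{P}_A,\mathbf{P}_B,\mathbf{Q}_A,\mathbf{Q}_B\in\mathbb{R}^{n\times n}$ be symmetric positive definite matrices; put $\mathbf{C}_A=\mathbf{P}_A+\mathbf{Q}_A$, $\mathbf{C}_B=\mathbf{P}_B+\mathbf{Q}_B$. Let $J$ be an increasing cost function (see context). Let $(\mathbf{K},\mathbf{B}_F)$, with $\mathbf{K}=(\mathbf{K}_A,\mathbf{K}_B)$, define a conservative fusion. Then $(\mathbf{K},\mathbf{B}_F)$ is a solution of the Optimal Fusion with Split Covariances problem (minimize $J(\mathbf{B}_F)$ over all conservative fusions $(\mathbf{K},\mathbf{B}_F)$) if and only if there exists $\omega^*\in\arg\min_{\omega\in[0,1]} J(\mathbf{B}_{\mathrm{SCI}}(\omega))$ such that $\mathbf{B}_F=\mathbf{B}_{\mathrm{SCI}}(\omega^* )$.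
   Context: $\mathcal{A}_{\mathrm{Split}}=\{\mathbf{M}\in\mathbb{R}^{n\times n} : \begin{bmatrix}\mathbf{P}_A & \mathbf{M}\\ \mathbf{M}^\intercal & \mathbf{P}_B\end{bmatrix}\succeq 0\}$ (set of admissible cross-covariances). For gains $\mathbf{K}=(\mathbf{K}_A,\mathbf{K}_B)$ of $n\times n$ matrices and $\mathbf{P}_{AB}\in\mathcal{A}_{\mathrm{Split}}$, define $\mathbf{C}_F(\mathbf{K},\mathbf{P}_{AB})=\mathbf{K}_A\mathbf{C}_A\mathbf{K}_A^\intercal+\mathbf{K}_A\mathbf{P}_{AB}\mathbf{K}_B^\intercal+\mathbf{K}_B\mathbf{P}_{AB}^\intercal\mathbf{K}_A^\intercal+\mathbf{K}_B\mathbf{C}_B\mathbf{K}_B^\intercal$. A pair $(\mathbf{K},\mathbf{B}_F)$ with $\mathbf{B}_F$ a symmetric matrix defines a conservative fusion if $\mathbf{K}_A+\mathbf{K}_B=\mathbf{I}$ and $\mathbf{B}_F\succeq\mathbf{C}_F(\mathbf{K},\mathbf{P}_{AB})$ for all $\mathbf{P}_{AB}\in\mathcal{A}_{\mathrm{Split}}$. For $\omega\in[0,1]$ and $\bar\omega=1-\omega$, the SCI bound is defined by $\mathbf{B}_{\mathrm{SCI}}(\omega)^{-1}=\omega(\mathbf{P}_A+\omega\mathbf{Q}_A)^{-1}+\bar\omega(\mathbf{P}_B+\bar\omega\mathbf{Q}_B)^{-1}$. A cost function $J$ on symmetric positive semidefinite matrices is increasing if $\mathbf{P}\preceq\mathbf{Q}$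 implies $J(\mathbf{P})\le J(\mathbf{Q})$, and $\mathbf{P}\preceq\mathbf{Q}$ with $\mathbf{P}\neq\mathbf{Q}$ implies $J(\mathbf{P})<J(\mathbf{Q})$. Here $\preceq$ is the Loewner order. *)

theory Defs
  imports "HOL-Analysis.Analysis"
begin

type_synonym 'n mat = "real^'n^'n"

definition sym_mat :: "real^'m^'m \<Rightarrow> bool" where
  "sym_mat M \<longleftrightarrow> transpose M = M"

definition psd :: "real^'m^'m \<Rightarrow> bool" where
  "psd M \<longleftrightarrow> sym_mat M \<and> (\<forall>x. 0 \<le> x \<bullet> (M *v x))"

definition pd :: "real^'m^'m \<Rightarrow> bool" where
  "pd M \<longleftrightarrow> sym_mat M \<and> (\<forall>x. x \<noteq> 0 \<longrightarrow> 0 < x \<bullet> (M *v x))"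

definition loewner_le :: "real^'m^'m \<Rightarrow> real^'m^'m \<Rightarrow> bool" where
  "loewner_le P Q \<longleftrightarrow> psd (Q - P)"

definition block_mat :: "real^'n^'n \<Rightarrow> real^'n^'n \<Rightarrow> real^'n^'n \<Rightarrow> real^'n^'n
    \<Rightarrow> real^('n + 'n)^('n + 'n)" where
  "block_mat A B C D = (\<chi> i j. case i of
       Inl a \<Rightarrow> (case j of Inl b \<Rightarrow> A $ a $ b | Inr b \<Rightarrow> B $ a $ b)
     | Inr a \<Rightarrow> (case j of Inl b \<Rightarrow> C $ a $ b | Inr b \<Rightarrow> D $ a $ b))"

definition A_split :: "'n::finite mat \<Rightarrow> 'n mat \<Rightarrow> 'n mat set" where
  "A_split PA PB = {M. psd (block_mat PA M (transpose M) PB)}"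

definition C_F :: "'n::finite mat \<Rightarrow> 'n mat \<Rightarrow> 'n mat \<Rightarrow> 'n mat \<Rightarrow> 'n mat \<Rightarrow> 'n mat" where
  "C_F CA CB KA KB PAB =
     KA ** CA ** transpose KA + KA ** PAB ** transpose KB
   + KB ** transpose PAB ** transpose KA + KB ** CB ** transpose KB"

definition conservative_fusion ::
  "'n::finite mat \<Rightarrow> 'n mat \<Rightarrow> 'n mat \<Rightarrow> 'n mat \<Rightarrow> 'n mat \<Rightarrow> 'n mat \<Rightarrow> 'n mat \<Rightarrow> bool" where
  "conservative_fusion PA PB QA QB KA KB BF \<longleftrightarrow>
     KA + KB = mat 1 \<and> sym_mat BF \<and>
     (\<forall>PAB \<in> A_split PA PB. loewner_le (C_F (PA + QA) (PB + QB) KA KB PAB) BF)"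

definition B_SCI :: "'n::finite mat \<Rightarrow> 'n mat \<Rightarrow> 'n mat \<Rightarrow> 'n mat \<Rightarrow> real \<Rightarrow> 'n mat" where
  "B_SCI PA PB QA QB \<omega> = matrix_inv
     (\<omega> *\<^sub>R matrix_inv (PA + \<omega> *\<^sub>R QA) + (1 - \<omega>) *\<^sub>R matrix_inv (PB + (1 - \<omega>) *\<^sub>R QB))"

definition increasing_cost :: "('n::finite mat \<Rightarrow> real) \<Rightarrow> bool" where
  "increasing_cost J \<longleftrightarrow>
     (\<forall>P Q. psd P \<and> psd Q \<and> loewner_le P Q \<longrightarrow> J P \<le> J Q) \<and>
     (\<forall>P Q. psd P \<and> psd Q \<and> loewner_le P Q \<and> P \<noteq> Q \<longrightarrow> J P < J Q)"

definition optimal_fusion ::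
  "('n::finite mat \<Rightarrow> real) \<Rightarrow> 'n mat \<Rightarrow> 'n mat \<Rightarrow> 'n mat \<Rightarrow> 'n mat \<Rightarrow> 'n mat \<Rightarrow> 'n mat \<Rightarrow> 'n mat \<Rightarrow> bool" where
  "optimal_fusion J PA PB QA QB KA KB BF \<longleftrightarrow>
     conservative_fusion PA PB QA QB KA KB BF \<and>
     (\<forall>KA' KB' BF'. conservative_fusion PA PB QA QB KA' KB' BF' \<longrightarrow> J BF \<le> J BF')"

end

theory Submission
  imports Defs
begin

text \<open>
  The worst admissible cross-covariance is rank one, so \<open>(K, B_F)\<close> is conservative iff for every
  \<open>x\<close>, with \<open>a = K_A\<^sup>T x\<close> and \<open>b = K_B\<^sup>T x\<close>,
  \<open>x\<^sup>T B_F x \<ge> a\<^sup>T Q_A a + b\<^sup>T Q_B b + (\<surd>(a\<^sup>T P_A a) + \<surd>(b\<^sup>T P_B b))\<^sup>2\<close>.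
  Each \<open>B_SCI(\<omega>)\<close> satisfies this with the information-filter gains, by
  \<open>(\<alpha> + \<beta>)\<^sup>2 \<le> \<alpha>\<^sup>2/\<omega> + \<beta>\<^sup>2/(1 - \<omega>)\<close>. Conversely every conservative \<open>B_F\<close> dominates some
  \<open>B_SCI(\<omega>)\<close>: this is an S-lemma for quadratic forms. For each \<open>x\<close> the admissible weights \<open>\<omega>\<close>
  form a closed interval. A rotation argument on pairs of vectors shows that every convex
  combination of the margins of \<open>x\<close> and \<open>y\<close> is nonnegative at some \<open>\<omega>\<close>, which forces
  the intervals of \<open>x\<close> and \<open>y\<close> to meet, and Helly's theorem on the line gives a common
  \<open>\<omega>\<close>. As \<open>J\<close> is strictly increasing, an optimal \<open>B_F\<close> is therefore a \<open>B_SCI(\<omega>)\<close> of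
  minimal cost, and conversely.
\<close>

section \<open>The covariance-intersection margin\<close>

text \<open>For \<open>0 < w < 1\<close>, \<open>ci_margin r a b w = w (1 - w) (r - a/w - b/(1 - w))\<close>: the slack in the
  bound \<open>a/w + b/(1 - w) \<le> r\<close> with denominators cleared, a concave quadratic in \<open>w\<close> on all of
  \<open>[0, 1]\<close>.\<close>

definition ci_margin :: "real \<Rightarrow> real \<Rightarrow> real \<Rightarrow> real \<Rightarrow> real" where
  "ci_margin r a b w = w * (1 - w) * r - (1 - w) * a - w * b"

lemma ci_margin_expand_at:
  "ci_margin r a b w = ci_margin r a b w0 + (r - 2 * w0 * r + a - b) * (w - w0) - r * (w - w0)\<^sup>2"
  unfolding ci_margin_def by (simp add: power2_eq_square algebra_simps)

lemma ci_margin_convex_combination: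
  "s * ci_margin r1 a1 b1 w + (1 - s) * ci_margin r2 a2 b2 w
   = ci_margin (s * r1 + (1 - s) * r2) (s * a1 + (1 - s) * a2) (s * b1 + (1 - s) * b2) w"
  unfolding ci_margin_def by (simp add: algebra_simps)

lemma is_interval_ci_margin_nonneg:
  assumes "0 \<le> r"
  shows "is_interval {w. 0 \<le> ci_margin r a b w}"
  unfolding is_interval_1
proof (intro ballI allI impI)
  fix l u w
  assume "l \<in> {w. 0 \<le> ci_margin r a b w}" "u \<in> {w. 0 \<le> ci_margin r a b w}" "l \<le> w \<and> w \<le> u"
  then have l: "0 \<le> ci_margin r a b l" and u: "0 \<le> ci_margin r a b u" and lwu: "l \<le> w" "w \<le> u"
    by auto
  show "w \<in> {w. 0 \<le> ci_margin r a b w}"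
  proof (cases "l = u")
    case False
    have "(u - l) * ci_margin r a b w
        = (u - w) * ci_margin r a b l + (w - l) * ci_margin r a b u
          + r * (w - l) * (u - w) * (u - l)"
      unfolding ci_margin_def by (simp add: algebra_simps)
    also have "\<dots> \<ge> 0"
      using l u lwu assms by (intro add_nonneg_nonneg mult_nonneg_nonneg) auto
    finally show ?thesis using False lwu by (simp add: zero_le_mult_iff)
  qed (use l lwu in simp)
qed

lemma ci_margin_nonneg_at_sqrt_ratio:
  assumes "0 \<le> a" "0 \<le> b" "(sqrt a + sqrt b)\<^sup>2 \<le> r"
  shows "\<exists>w\<in>{0..1}. 0 \<le> ci_margin r a b w"
proof (cases "a = 0")
  case True
  then show ?thesis by (intro bexI[of _ 0]) (auto simp: ci_margin_def)
next
  case False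
  define s t where "s = sqrt a" and "t = sqrt b"
  have s: "0 < s" and t: "0 \<le> t" using False assms by (auto simp: s_def t_def)
  define w where "w = s / (s + t)"
  have w: "w \<in> {0..1}" "1 - w = t / (s + t)" using s t by (auto simp: w_def field_simps)
  have "(1 - w) * a + w * b = w * (1 - w) * (s + t)\<^sup>2"
  proof -
    have "a = s\<^sup>2" "b = t\<^sup>2" using assms(1,2) by (simp_all add: s_def t_def)
    moreover have "s + t \<noteq> 0" using s t by simp
    ultimately show ?thesis unfolding w(2) w_def by (simp add: field_simps power2_eq_square)
  qed
  then have "ci_margin r a b w = w * (1 - w) * (r - (s + t)\<^sup>2)"
    unfolding ci_margin_def by (simp add: algebra_simps)
  also have "\<dots> \<ge> 0"
    using w(1) assms(3) unfolding s_def t_def by (intro mult_nonneg_nonneg) auto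
  finally show ?thesis using w by blast
qed

lemma ci_margin_nonneg_imp_le:
  assumes "0 < w" "w < 1" "0 \<le> ci_margin r a b w"
  shows "a / w + b / (1 - w) \<le> r"
proof -
  have "a / w + b / (1 - w) = r - ci_margin r a b w / (w * (1 - w))"
    using assms(1,2) unfolding ci_margin_def by (simp add: field_simps)
  also have "\<dots> \<le> r" using assms by simp
  finally show ?thesis .
qed

lemma power2_add_le_weighted:
  fixes \<alpha> \<beta> w :: real
  assumes "0 < w" "w < 1"
  shows "(\<alpha> + \<beta>)\<^sup>2 \<le> \<alpha>\<^sup>2 / w + \<beta>\<^sup>2 / (1 - w)"
proof -
  have "\<alpha>\<^sup>2 / w + \<beta>\<^sup>2 / (1 - w) - (\<alpha> + \<beta>)\<^sup>2 = ((1 - w) * \<alpha> - w * \<beta>)\<^sup>2 / (w * (1 - w))"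
    using assms by (simp add: field_simps power2_eq_square)
  also have "\<dots> \<ge> 0" using assms by simp
  finally show ?thesis by simp
qed

lemma ci_margin_negative_combination:
  assumes r1: "0 \<le> r1" and r2: "0 \<le> r2"
    and c: "ci_margin r1 a1 b1 w0 = c" "ci_margin r2 a2 b2 w0 = c" "c < 0"
    and w1: "0 \<le> ci_margin r1 a1 b1 w1" and w2: "0 \<le> ci_margin r2 a2 b2 w2"
    and between: "(w1 - w0) * (w2 - w0) \<le> 0"
  shows "\<exists>s\<in>{0..1}. \<forall>w. s * ci_margin r1 a1 b1 w + (1 - s) * ci_margin r2 a2 b2 w < 0"
proof -
  define D1 D2 where "D1 = r1 - 2 * w0 * r1 + a1 - b1" and "D2 = r2 - 2 * w0 * r2 + a2 - b2"
  have g1: "ci_margin r1 a1 b1 w = c + D1 * (w - w0) - r1 * (w - w0)\<^sup>2" for w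
    unfolding c(1)[symmetric] D1_def by (rule ci_margin_expand_at)
  have g2: "ci_margin r2 a2 b2 w = c + D2 * (w - w0) - r2 * (w - w0)\<^sup>2" for w
    unfolding c(2)[symmetric] D2_def by (rule ci_margin_expand_at)
  have "0 < D1 * (w1 - w0)" using w1 c(3) r1 unfolding g1
    by (smt (verit) mult_nonneg_nonneg zero_le_power2)
  moreover have "0 < D2 * (w2 - w0)" using w2 c(3) r2 unfolding g2
    by (smt (verit) mult_nonneg_nonneg zero_le_power2)
  ultimately have "D1 * D2 < 0" using between
    by (smt (verit) mult_pos_pos mult.assoc mult.left_commute mult_le_0_iff)
  \<comment> \<open>Cancelling the slopes at \<open>w0\<close> leaves \<open>c\<close> minus a nonnegative multiple of \<open>(w - w0)\<^sup>2\<close>.\<close>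
  define s where "s = D2 / (D2 - D1)"
  have s: "s \<in> {0..1}"
    using \<open>D1 * D2 < 0\<close> by (auto simp: s_def divide_simps mult_less_0_iff)
  have "D2 - D1 \<noteq> 0" using \<open>D1 * D2 < 0\<close> by auto
  then have slope: "s * D1 + (1 - s) * D2 = 0" by (simp add: s_def field_simps)
  have "s * ci_margin r1 a1 b1 w + (1 - s) * ci_margin r2 a2 b2 w < 0" for w
  proof -
    have "s * ci_margin r1 a1 b1 w + (1 - s) * ci_margin r2 a2 b2 w
        = c + (s * D1 + (1 - s) * D2) * (w - w0) - (s * r1 + (1 - s) * r2) * (w - w0)\<^sup>2"
      unfolding g1 g2 by (simp add: algebra_simps)
    also have "\<dots> = c - (s * r1 + (1 - s) * r2) * (w - w0)\<^sup>2" using slope by simp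
    also have "\<dots> < 0"
      using c(3) s r1 r2 by (smt (verit) mult_nonneg_nonneg zero_le_power2 atLeastAtMost_iff)
    finally show ?thesis .
  qed
  then show ?thesis using s by blast
qed

lemma ci_margin_common_nonneg:
  assumes r1: "0 \<le> r1" and r2: "0 \<le> r2"
    and comb: "\<And>s. s \<in> {0..1} \<Longrightarrow>
      \<exists>w\<in>{0..1}. 0 \<le> s * ci_margin r1 a1 b1 w + (1 - s) * ci_margin r2 a2 b2 w"
  shows "\<exists>w\<in>{0..1}. 0 \<le> ci_margin r1 a1 b1 w \<and> 0 \<le> ci_margin r2 a2 b2 w"
proof (rule ccontr)
  assume none: "\<not> ?thesis"
  let ?g1 = "ci_margin r1 a1 b1" and ?g2 = "ci_margin r2 a2 b2"
  obtain w1 where w1: "w1 \<in> {0..1}" "0 \<le> ?g1 w1" using comb[of 1] by auto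
  obtain w2 where w2: "w2 \<in> {0..1}" "0 \<le> ?g2 w2" using comb[of 0] by auto
  have "?g2 w1 < 0" "?g1 w2 < 0" using none w1 w2 by (metis not_le)+
  then have "0 \<in> closed_segment (?g1 w1 - ?g2 w1) (?g1 w2 - ?g2 w2)"
    using w1 w2 by (auto simp: closed_segment_eq_real_ivl)
  moreover have "continuous_on (closed_segment w1 w2) (\<lambda>w. ?g1 w - ?g2 w)"
    unfolding ci_margin_def by (intro continuous_intros)
  ultimately obtain w0 where w0: "w0 \<in> closed_segment w1 w2" and eq: "?g1 w0 = ?g2 w0"
    using IVT'_closed_segment_real by fastforce
  have "w0 \<in> {0..1}" using w0 w1 w2 by (auto simp: closed_segment_eq_real_ivl split: if_splits)
  then have "?g1 w0 < 0" using none eq by (metis not_le)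
  moreover have "(w1 - w0) * (w2 - w0) \<le> 0"
    using w0 by (auto simp: closed_segment_eq_real_ivl mult_le_0_iff split: if_splits)
  ultimately obtain s where "s \<in> {0..1}" and "\<forall>w. s * ?g1 w + (1 - s) * ?g2 w < 0"
    using ci_margin_negative_combination[OF r1 r2 refl eq[symmetric] _ w1(2) w2(2)] by blast
  then show False using comb by (meson not_le)
qed

lemma Inter_compact_intervals_nonempty:
  fixes \<F> :: "real set set"
  assumes "\<And>S. S \<in> \<F> \<Longrightarrow> compact S" and "\<And>S. S \<in> \<F> \<Longrightarrow> is_interval S"
    and "\<And>S T. S \<in> \<F> \<Longrightarrow> T \<in> \<F> \<Longrightarrow> S \<inter> T \<noteq> {}"
  shows "\<Inter>\<F> \<noteq> {}"
proof (rule compact_fip_Heine_Borel)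
  fix \<G> assume "finite \<G>" "\<G> \<subseteq> \<F>"
  show "\<Inter>\<G> \<noteq> {}"
  proof (cases "card \<G> \<ge> 2")
    case True
    show ?thesis
    proof (rule Helly)
      show "\<forall>S\<in>\<G>. convex S" using \<open>\<G> \<subseteq> \<F>\<close> assms(2) by (auto simp: is_interval_convex_1)
      show "\<Inter>T \<noteq> {}" if "T \<subseteq> \<G>" "card T = DIM(real) + 1" for T
      proof -
        have "card T = 2" using that(2) by simp
        then obtain S1 S2 where "T = {S1, S2}" by (auto simp: card_2_iff)
        moreover have "S1 \<in> \<F>" "S2 \<in> \<F>" using calculation that(1) \<open>\<G> \<subseteq> \<F>\<close> by auto
        ultimately show ?thesis using assms(3) by simp
      qed
    qed (use True in simp)
  next
    case False
    then have same: "S = T" if "S \<in> \<G>" "T \<in> \<G>" for S T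
      using that card_le_Suc0_iff_eq[OF \<open>finite \<G>\<close>] by simp
    show ?thesis
    proof (cases "\<G> = {}")
      case False
      then obtain S where "S \<in> \<G>" by blast
      then have "\<Inter>\<G> = S" using same by blast
      then show ?thesis using assms(3) \<open>S \<in> \<G>\<close> \<open>\<G> \<subseteq> \<F>\<close> by blast
    qed simp
  qed
qed (use assms(1) in auto)

section \<open>Quadratic forms and positive definite matrices\<close>

definition quad_form :: "real^'n^'n \<Rightarrow> real^'n \<Rightarrow> real" where
  "quad_form M x = x \<bullet> (M *v x)"

lemma quad_form_add_mat: "quad_form (M + N) x = quad_form M x + quad_form N x"
  unfolding quad_form_def by (simp add: matrix_vector_mult_add_rdistrib inner_add_right)

lemma quad_form_diff_mat: "quad_form (M - N) x = quad_form M x - quad_form N x"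
  unfolding quad_form_def by (simp add: matrix_vector_mult_diff_rdistrib inner_diff_right)

lemma quad_form_scaleR_mat: "quad_form (c *\<^sub>R M) x = c * quad_form M x"
  unfolding quad_form_def by (simp add: scaleR_matrix_vector_assoc[symmetric])

lemma quad_form_zero [simp]: "quad_form M 0 = 0"
  unfolding quad_form_def by simp

lemma quad_form_scaleR: "quad_form M (c *\<^sub>R x) = c\<^sup>2 * quad_form M x"
  unfolding quad_form_def by (simp add: matrix_vector_mult_scaleR power2_eq_square)

lemma quad_form_lincomb:
  "quad_form M (c *\<^sub>R u + d *\<^sub>R v)
   = c\<^sup>2 * quad_form M u + c * d * (u \<bullet> (M *v v) + v \<bullet> (M *v u)) + d\<^sup>2 * quad_form M v"
  unfolding quad_form_def
  by (simp add: matrix_vector_right_distrib matrix_vector_mult_scaleR inner_add_left inner_add_right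
      power2_eq_square algebra_simps)

lemma quad_form_rotation:
  "quad_form M (c *\<^sub>R u + s *\<^sub>R v) + quad_form M ((- s) *\<^sub>R u + c *\<^sub>R v)
   = (c\<^sup>2 + s\<^sup>2) * (quad_form M u + quad_form M v)"
  unfolding quad_form_lincomb by (simp add: algebra_simps power2_eq_square)

lemma inner_matrix_vector_transpose: "x \<bullet> (M *v y) = (transpose M *v x) \<bullet> (y::real^'n)"
  by (simp add: dot_lmul_matrix)

lemma quad_form_congruence: "quad_form (K ** M ** transpose K) x = quad_form M (transpose K *v x)"
  unfolding quad_form_def
  by (simp add: matrix_vector_mul_assoc[symmetric] inner_matrix_vector_transpose[of x K])

lemma sym_mat_inner_commute: "sym_mat M \<Longrightarrow> x \<bullet> (M *v y) = y \<bullet> (M *v (x::real^'n))"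
  unfolding sym_mat_def by (metis inner_matrix_vector_transpose inner_commute)

lemma transpose_add: "transpose (A + B) = transpose A + transpose (B::'a::semiring_1^'n^'m)"
  by (simp add: transpose_def vec_eq_iff)

lemma transpose_diff: "transpose (A - B) = transpose A - transpose (B::'a::ring_1^'n^'m)"
  by (simp add: transpose_def vec_eq_iff)

lemma sym_mat_add: "sym_mat M \<Longrightarrow> sym_mat N \<Longrightarrow> sym_mat (M + N)"
  unfolding sym_mat_def by (simp add: transpose_add)

lemma sym_mat_diff: "sym_mat M \<Longrightarrow> sym_mat N \<Longrightarrow> sym_mat (M - N)"
  unfolding sym_mat_def by (simp add: transpose_diff)

lemma psd_iff_quad_form: "psd M \<longleftrightarrow> sym_mat M \<and> (\<forall>x. 0 \<le> quad_form M x)"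
  unfolding psd_def quad_form_def ..

lemma loewner_le_iff_quad_form:
  assumes "sym_mat P" "sym_mat Q"
  shows "loewner_le P Q \<longleftrightarrow> (\<forall>x. quad_form P x \<le> quad_form Q x)"
  using assms unfolding loewner_le_def psd_iff_quad_form quad_form_diff_mat
  by (auto intro: sym_mat_diff)

lemma pd_imp_sym_mat: "pd M \<Longrightarrow> sym_mat M"
  unfolding pd_def by simp

lemma pd_quad_form_nonneg: "pd M \<Longrightarrow> 0 \<le> quad_form M x"
  unfolding pd_def quad_form_def by (cases "x = 0") auto

lemma pd_quad_form_eq_0: "pd M \<Longrightarrow> quad_form M x = 0 \<longleftrightarrow> x = 0"
  unfolding pd_def quad_form_def by force

lemma pd_imp_psd: "pd M \<Longrightarrow> psd M"
  unfolding psd_iff_quad_form by (simp add: pd_imp_sym_mat pd_quad_form_nonneg)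

lemma pd_add: "pd M \<Longrightarrow> pd N \<Longrightarrow> pd (M + N)"
  unfolding pd_def
  by (auto simp: sym_mat_add matrix_vector_mult_add_rdistrib inner_add_right add_pos_pos)

lemma pd_scaleR: "pd M \<Longrightarrow> 0 < c \<Longrightarrow> pd (c *\<^sub>R M)"
  unfolding pd_def sym_mat_def
  by (auto simp: transpose_scalar scaleR_matrix_vector_assoc[symmetric])

lemma psd_cauchy_schwarz:
  assumes "psd M"
  shows "\<bar>u \<bullet> (M *v v)\<bar> \<le> sqrt (quad_form M u) * sqrt (quad_form M v)"
proof -
  define B where "B = u \<bullet> (M *v v)"
  have nonneg: "0 \<le> quad_form M u + 2 * t * B + t\<^sup>2 * quad_form M v" for t
  proof -
    have "v \<bullet> (M *v u) = B"
      using assms sym_mat_inner_commute unfolding B_def psd_iff_quad_form by metis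
    then have "quad_form M (1 *\<^sub>R u + t *\<^sub>R v) = quad_form M u + 2 * t * B + t\<^sup>2 * quad_form M v"
      unfolding quad_form_lincomb B_def by simp
    then show ?thesis using assms unfolding psd_iff_quad_form by metis
  qed
  have "B\<^sup>2 \<le> quad_form M u * quad_form M v"
  proof (cases "quad_form M v = 0")
    case True
    have "B = 0"
    proof (rule ccontr)
      assume "B \<noteq> 0"
      have "0 \<le> quad_form M u + 2 * (- (quad_form M u + 1) / (2 * B)) * B"
        using nonneg[of "- (quad_form M u + 1) / (2 * B)"] True by simp
      also have "\<dots> = -1" using \<open>B \<noteq> 0\<close> by (simp add: field_simps)
      finally show False by simp
    qed
    then show ?thesis using True by simp
  next
    case False
    then have v: "0 < quad_form M v"
      using assms unfolding psd_iff_quad_form by (metis less_eq_real_def)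
    have "0 \<le> quad_form M u + 2 * (- B / quad_form M v) * B
        + (- B / quad_form M v)\<^sup>2 * quad_form M v"
      by (rule nonneg)
    also have "\<dots> = quad_form M u - B\<^sup>2 / quad_form M v"
      using v by (simp add: field_simps power2_eq_square)
    finally show ?thesis using v by (simp add: field_simps)
  qed
  then have "sqrt (B\<^sup>2) \<le> sqrt (quad_form M u * quad_form M v)" by (rule real_sqrt_le_mono)
  then show ?thesis unfolding B_def real_sqrt_mult by simp
qed

lemma matrix_inv_inverse:
  assumes "invertible (M::real^'n^'n)"
  shows matrix_inv_right: "M ** matrix_inv M = mat 1"
    and matrix_inv_left: "matrix_inv M ** M = mat 1"
proof -
  have "M ** matrix_inv M = mat 1 \<and> matrix_inv M ** M = mat 1"
    using assms unfolding invertible_def matrix_inv_def by (rule someI_ex)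
  then show "M ** matrix_inv M = mat 1" "matrix_inv M ** M = mat 1" by auto
qed

lemma matrix_inverse_unique: "A ** B = mat 1 \<Longrightarrow> C ** A = mat 1 \<Longrightarrow> B = (C::real^'n^'n)"
  by (metis matrix_mul_assoc matrix_mul_lid matrix_mul_rid)

lemma matrix_inv_eqI: "A ** B = mat 1 \<Longrightarrow> B ** A = mat 1 \<Longrightarrow> matrix_inv A = (B::real^'n^'n)"
  by (metis matrix_inverse_unique invertible_def matrix_inv_left)

lemma matrix_inv_mult_vector: "invertible (M::real^'n^'n) \<Longrightarrow> M *v (matrix_inv M *v x) = x"
  by (simp add: matrix_vector_mul_assoc matrix_inv_right)

lemma matrix_inv_matrix_inv: "invertible (M::real^'n^'n) \<Longrightarrow> matrix_inv (matrix_inv M) = M"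
  by (intro matrix_inv_eqI matrix_inv_left matrix_inv_right)

lemma matrix_inv_scaleR:
  "invertible (M::real^'n^'n) \<Longrightarrow> c \<noteq> 0 \<Longrightarrow> matrix_inv (c *\<^sub>R M) = (1 / c) *\<^sub>R matrix_inv M"
  by (intro matrix_inv_eqI)
    (simp_all add: matrix_scalar_ac scalar_matrix_assoc[symmetric] matrix_inv_right matrix_inv_left)

lemma pd_invertible: "pd (M::real^'n^'n) \<Longrightarrow> invertible M"
  unfolding invertible_left_inverse matrix_left_invertible_ker pd_def
  by (metis inner_zero_right less_irrefl)

lemma sym_mat_matrix_inv:
  assumes "sym_mat M" "invertible (M::real^'n^'n)"
  shows "sym_mat (matrix_inv M)"
proof -
  have "transpose (matrix_inv M) ** M = mat 1"
    using arg_cong[OF matrix_inv_right[OF assms(2)], of transpose] assms(1)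
    by (simp add: sym_mat_def matrix_transpose_mul)
  then show ?thesis
    using matrix_inverse_unique matrix_inv_right[OF assms(2)] unfolding sym_mat_def by metis
qed

lemma pd_matrix_inv:
  assumes "pd (M::real^'n^'n)"
  shows "pd (matrix_inv M)"
proof -
  have inv: "invertible M" using pd_invertible[OF assms] .
  have "0 < w \<bullet> (matrix_inv M *v w)" if "w \<noteq> 0" for w
  proof -
    define v where "v = matrix_inv M *v w"
    have Mv: "M *v v = w" unfolding v_def using matrix_inv_mult_vector[OF inv] .
    then have "v \<noteq> 0" using that by auto
    then have "0 < v \<bullet> (M *v v)" using assms unfolding pd_def by blast
    then show ?thesis using Mv by (simp add: v_def inner_commute)
  qed
  then show ?thesis
    unfolding pd_def using sym_mat_matrix_inv[OF pd_imp_sym_mat[OF assms] inv] by blast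
qed

section \<open>An S-lemma for quadratic forms\<close>

lemma sqrt_add_sqrt_power2_additive:
  fixes a1 a2 b1 b2 :: real
  assumes "0 \<le> a1" "0 \<le> a2" "0 \<le> b1" "0 \<le> b2" and ratio: "a1 * b2 = a2 * b1"
  shows "(sqrt (a1 + a2) + sqrt (b1 + b2))\<^sup>2 = (sqrt a1 + sqrt b1)\<^sup>2 + (sqrt a2 + sqrt b2)\<^sup>2"
proof -
  have "(a1 + a2) * (b1 + b2) = (sqrt (a1 * b1) + sqrt (a2 * b2))\<^sup>2"
  proof -
    have "sqrt (a1 * b1) * sqrt (a2 * b2) = sqrt ((a1 * b2) * (a2 * b1))"
      by (simp add: real_sqrt_mult[symmetric] ac_simps)
    also have "\<dots> = a1 * b2" using ratio assms by simp
    finally show ?thesis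
      using assms ratio by (simp add: power2_eq_square algebra_simps)
  qed
  then have "sqrt (a1 + a2) * sqrt (b1 + b2) = sqrt a1 * sqrt b1 + sqrt a2 * sqrt b2"
    using assms by (simp add: real_sqrt_mult[symmetric])
  then show ?thesis using assms by (simp add: power2_eq_square algebra_simps)
qed

lemma quad_form_sqrt_bound_two_vectors:
  assumes A: "\<And>x. 0 \<le> quad_form A x" and B: "\<And>x. 0 \<le> quad_form B x"
    and R: "\<And>x. (sqrt (quad_form A x) + sqrt (quad_form B x))\<^sup>2 \<le> quad_form R x"
  shows "(sqrt (quad_form A u + quad_form A v) + sqrt (quad_form B u + quad_form B v))\<^sup>2
    \<le> quad_form R u + quad_form R v"
proof -
  define \<alpha> \<beta> where "\<alpha> = quad_form A u + quad_form A v" and "\<beta> = quad_form B u + quad_form B v"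
  define F where "F = \<beta> *\<^sub>R A - \<alpha> *\<^sub>R B"
  have F: "quad_form F z = \<beta> * quad_form A z - \<alpha> * quad_form B z" for z
    unfolding F_def quad_form_diff_mat quad_form_scaleR_mat ..
  \<comment> \<open>Rotate the pair \<open>(u, v)\<close> until both rotated vectors see \<open>A\<close> and \<open>B\<close> in the
    same ratio \<open>\<alpha> : \<beta>\<close>; rotations preserve all sums \<open>quad_form M u + quad_form M v\<close>.\<close>
  define z1 z2 where "z1 \<theta> = cos \<theta> *\<^sub>R u + sin \<theta> *\<^sub>R v" and "z2 \<theta> = (- sin \<theta>) *\<^sub>R u + cos \<theta> *\<^sub>R v"
    for \<theta>
  have rot: "quad_form M (z1 \<theta>) + quad_form M (z2 \<theta>) = quad_form M u + quad_form M v" for M \<theta>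
    unfolding z1_def z2_def quad_form_rotation by simp
  have "continuous_on (closed_segment 0 (pi / 2)) (\<lambda>\<theta>. quad_form F (z1 \<theta>))"
    unfolding z1_def quad_form_lincomb by (intro continuous_intros)
  moreover have "quad_form F (z1 (pi / 2)) = - quad_form F (z1 0)"
    unfolding z1_def F by (simp add: \<alpha>_def \<beta>_def algebra_simps)
  then have "0 \<in> closed_segment (quad_form F (z1 0)) (quad_form F (z1 (pi / 2)))"
    by (simp add: closed_segment_eq_real_ivl)
  ultimately obtain \<theta> where F1: "quad_form F (z1 \<theta>) = 0"
    using IVT'_closed_segment_real[of 0 "\<lambda>\<theta>. quad_form F (z1 \<theta>)" 0 "pi / 2"] by blast
  have F2: "quad_form F (z2 \<theta>) = 0"
    using rot[of F \<theta>] F1 unfolding F \<alpha>_def \<beta>_def by (simp add: algebra_simps)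
  have "(quad_form B (z1 \<theta>) + quad_form B (z2 \<theta>)) * quad_form A (z1 \<theta>)
      = (quad_form A (z1 \<theta>) + quad_form A (z2 \<theta>)) * quad_form B (z1 \<theta>)"
    using F1 unfolding F rot \<alpha>_def \<beta>_def by simp
  then have "quad_form A (z1 \<theta>) * quad_form B (z2 \<theta>) = quad_form A (z2 \<theta>) * quad_form B (z1 \<theta>)"
    by (simp add: algebra_simps)
  then have "(sqrt \<alpha> + sqrt \<beta>)\<^sup>2
      = (sqrt (quad_form A (z1 \<theta>)) + sqrt (quad_form B (z1 \<theta>)))\<^sup>2
      + (sqrt (quad_form A (z2 \<theta>)) + sqrt (quad_form B (z2 \<theta>)))\<^sup>2"
    using sqrt_add_sqrt_power2_additive A B rot unfolding \<alpha>_def \<beta>_def by metis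
  also have "\<dots> \<le> quad_form R (z1 \<theta>) + quad_form R (z2 \<theta>)" by (intro add_mono R)
  finally show ?thesis unfolding rot \<alpha>_def \<beta>_def .
qed

lemma ex_weight_ci_margin_nonneg:
  assumes A: "\<And>x. 0 \<le> quad_form A x" and B: "\<And>x. 0 \<le> quad_form B x"
    and R: "\<And>x. (sqrt (quad_form A x) + sqrt (quad_form B x))\<^sup>2 \<le> quad_form R x"
  shows "\<exists>w\<in>{0..1}. \<forall>x. 0 \<le> ci_margin (quad_form R x) (quad_form A x) (quad_form B x) w"
proof -
  let ?g = "\<lambda>x. ci_margin (quad_form R x) (quad_form A x) (quad_form B x)"
  define I where "I x = {0..1} \<inter> {w. 0 \<le> ?g x w}" for x
  have R0: "0 \<le> quad_form R x" for x using R[of x] by (smt (verit) zero_le_power2)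
  have "compact (I x)" for x
  proof -
    have "closed {w. 0 \<le> ?g x w}"
      unfolding ci_margin_def by (intro closed_Collect_le continuous_intros)
    then show ?thesis unfolding I_def by (intro compact_Int_closed) auto
  qed
  moreover have "is_interval (I x)" for x
    unfolding I_def using is_interval_ci_margin_nonneg[OF R0] by (intro is_interval_Int) auto
  moreover have "I x \<inter> I y \<noteq> {}" for x y
  proof -
    have "\<exists>w\<in>{0..1}. 0 \<le> s * ?g x w + (1 - s) * ?g y w" if s: "s \<in> {0..1}" for s
    proof -
      \<comment> \<open>The mixture of \<open>x\<close> and \<open>y\<close> is the two-vector form of the hypothesis.\<close>
      define u v where "u = sqrt s *\<^sub>R x" and "v = sqrt (1 - s) *\<^sub>R y"
      have uv: "quad_form M u = s * quad_form M x" "quad_form M v = (1 - s) * quad_form M y" for M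
        using s unfolding u_def v_def quad_form_scaleR by simp_all
      obtain w where "w \<in> {0..1}"
        and "0 \<le> ci_margin (quad_form R u + quad_form R v)
          (quad_form A u + quad_form A v) (quad_form B u + quad_form B v) w"
        using ci_margin_nonneg_at_sqrt_ratio quad_form_sqrt_bound_two_vectors[OF A B R]
          A B by (meson add_nonneg_nonneg)
      then show ?thesis unfolding ci_margin_convex_combination uv by blast
    qed
    then show ?thesis unfolding I_def using ci_margin_common_nonneg[OF R0 R0] by blast
  qed
  ultimately have "\<Inter>(range I) \<noteq> {}" by (intro Inter_compact_intervals_nonempty) auto
  then show ?thesis unfolding I_def by blast
qed

section \<open>Conservative fusion\<close>

definition block_vec :: "real^'n \<Rightarrow> real^'n \<Rightarrow> real^('n + 'n)" where
  "block_vec u v = (\<chi> k. case k of Inl i \<Rightarrow> u $ i | Inr i \<Rightarrow> v $ i)"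

lemma block_vec_cases:
  obtains u v where "z = block_vec u v"
proof
  show "z = block_vec (\<chi> i. z $ Inl i) (\<chi> i. z $ Inr i)"
    by (simp add: block_vec_def vec_eq_iff split: sum.split)
qed

lemma sum_UNIV_sum_type:
  fixes f :: "'a::finite + 'b::finite \<Rightarrow> 'c::comm_monoid_add"
  shows "(\<Sum>k\<in>UNIV. f k) = (\<Sum>i\<in>UNIV. f (Inl i)) + (\<Sum>i\<in>UNIV. f (Inr i))"
  using sum.Plus[of UNIV UNIV f] by (simp add: o_def)

lemma inner_block_mat:
  "block_vec u v \<bullet> (block_mat A B C D *v block_vec u' v')
   = u \<bullet> (A *v u') + u \<bullet> (B *v v') + v \<bullet> (C *v u') + v \<bullet> (D *v v')"
  by (simp add: inner_vec_def matrix_vector_mult_def block_mat_def block_vec_def sum_UNIV_sum_type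
      sum_distrib_left distrib_left sum.distrib algebra_simps)

lemma quad_form_block_mat:
  "quad_form (block_mat A M (transpose M) B) (block_vec u v)
   = quad_form A u + 2 * (u \<bullet> (M *v v)) + quad_form B v"
proof -
  have "v \<bullet> (transpose M *v u) = u \<bullet> (M *v v)"
    unfolding inner_matrix_vector_transpose[of v] transpose_transpose by (rule inner_commute)
  then show ?thesis unfolding quad_form_def inner_block_mat by simp
qed

lemma sym_mat_block_mat:
  "sym_mat A \<Longrightarrow> sym_mat B \<Longrightarrow> sym_mat (block_mat A M (transpose M) B)"
  unfolding sym_mat_def by (simp add: transpose_def block_mat_def vec_eq_iff split: sum.split)

lemma A_split_inner_le:
  assumes "M \<in> A_split PA PB"
  shows "a \<bullet> (M *v b) \<le> sqrt (quad_form PA a) * sqrt (quad_form PB b)"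
proof -
  let ?M = "block_mat PA M (transpose M) PB"
  have "\<bar>block_vec a 0 \<bullet> (?M *v block_vec 0 b)\<bar>
    \<le> sqrt (quad_form ?M (block_vec a 0)) * sqrt (quad_form ?M (block_vec 0 b))"
    using assms unfolding A_split_def by (intro psd_cauchy_schwarz) simp
  then show ?thesis unfolding inner_block_mat quad_form_block_mat by simp
qed

lemma A_splitI:
  fixes PA PB :: "real^'n^'n"
  assumes PA: "psd PA" and PB: "psd PB"
    and bound: "\<And>u v. \<bar>u \<bullet> (M *v v)\<bar> \<le> sqrt (quad_form PA u) * sqrt (quad_form PB v)"
  shows "M \<in> A_split PA PB"
proof -
  have "0 \<le> quad_form (block_mat PA M (transpose M) PB) z" for z
  proof -
    obtain u v where z: "z = block_vec u v" by (rule block_vec_cases)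
    define s t where "s = sqrt (quad_form PA u)" and "t = sqrt (quad_form PB v)"
    have st: "quad_form PA u = s\<^sup>2" "quad_form PB v = t\<^sup>2"
      using PA PB by (simp_all add: s_def t_def psd_iff_quad_form)
    have "- (s * t) \<le> u \<bullet> (M *v v)" using bound[of u v] by (simp add: s_def t_def)
    then have "0 \<le> (s - t)\<^sup>2 + 2 * (s * t + u \<bullet> (M *v v))" by simp
    then show ?thesis
      unfolding z quad_form_block_mat st by (simp add: power2_eq_square algebra_simps)
  qed
  then show ?thesis
    using PA PB sym_mat_block_mat unfolding A_split_def psd_iff_quad_form by blast
qed

lemma A_split_inner_attained:
  fixes PA PB :: "real^'n^'n"
  assumes PA: "pd PA" and PB: "pd PB"
  shows "\<exists>M \<in> A_split PA PB. a \<bullet> (M *v b) = sqrt (quad_form PA a) * sqrt (quad_form PB b)"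
proof -
  define \<alpha> \<beta> where "\<alpha> = sqrt (quad_form PA a)" and "\<beta> = sqrt (quad_form PB b)"
  define M where "M = (1 / (\<alpha> * \<beta>)) *\<^sub>R (\<chi> i j. (PA *v a) $ i * (PB *v b) $ j)"
  have outer: "(\<chi> i j. p $ i * q $ j) *v v = (q \<bullet> v) *\<^sub>R p" for p q v :: "real^'n"
    by (simp add: vec_eq_iff matrix_vector_mult_def inner_vec_def sum_distrib_left ac_simps)
  have Mv: "M *v v = (((PB *v b) \<bullet> v) / (\<alpha> * \<beta>)) *\<^sub>R (PA *v a)" for v
    unfolding M_def scaleR_matrix_vector_assoc[symmetric] outer by simp
  have \<alpha>\<beta>: "0 \<le> \<alpha>" "0 \<le> \<beta>" "a \<bullet> (PA *v a) = \<alpha>\<^sup>2" "(PB *v b) \<bullet> b = \<beta>\<^sup>2"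
    using pd_quad_form_nonneg[OF PA, of a] pd_quad_form_nonneg[OF PB, of b]
    by (simp_all add: \<alpha>_def \<beta>_def quad_form_def inner_commute)
  have "\<bar>u \<bullet> (M *v v)\<bar> \<le> sqrt (quad_form PA u) * sqrt (quad_form PB v)" for u v
  proof -
    have "\<bar>u \<bullet> (PA *v a)\<bar> \<le> sqrt (quad_form PA u) * \<alpha>"
      "\<bar>(PB *v b) \<bullet> v\<bar> \<le> sqrt (quad_form PB v) * \<beta>"
      using psd_cauchy_schwarz[OF pd_imp_psd[OF PA], of u a]
        psd_cauchy_schwarz[OF pd_imp_psd[OF PB], of v b]
      by (simp_all add: \<alpha>_def \<beta>_def inner_commute[of "PB *v b"]
          sym_mat_inner_commute[OF pd_imp_sym_mat[OF PB], of v])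
    then have "\<bar>u \<bullet> (PA *v a)\<bar> * \<bar>(PB *v b) \<bullet> v\<bar>
        \<le> (sqrt (quad_form PA u) * \<alpha>) * (sqrt (quad_form PB v) * \<beta>)"
      using \<alpha>\<beta> by (intro mult_mono) auto
    then show ?thesis
      unfolding Mv using \<alpha>\<beta> pd_quad_form_nonneg[OF PA, of u] pd_quad_form_nonneg[OF PB, of v]
      by (cases "\<alpha> * \<beta> = 0") (auto simp: abs_mult field_simps mult.commute)
  qed
  then have "M \<in> A_split PA PB" using PA PB by (intro A_splitI pd_imp_psd)
  moreover have "a \<bullet> (M *v b) = \<alpha> * \<beta>"
    unfolding Mv using \<alpha>\<beta> by (cases "\<alpha> * \<beta> = 0") (auto simp: power2_eq_square inner_commute)
  ultimately show ?thesis unfolding \<alpha>_def \<beta>_def by blast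
qed

lemma quad_form_C_F:
  "quad_form (C_F CA CB KA KB M) x
   = quad_form CA (transpose KA *v x) + quad_form CB (transpose KB *v x)
     + 2 * ((transpose KA *v x) \<bullet> (M *v (transpose KB *v x)))"
proof -
  have bilinear:
    "x \<bullet> ((K ** N ** transpose L) *v x) = (transpose K *v x) \<bullet> (N *v (transpose L *v x))" for K N L
    by (simp only: matrix_vector_mul_assoc[symmetric] inner_matrix_vector_transpose[of x K])
  have "x \<bullet> ((KB ** transpose M ** transpose KA) *v x)
      = (transpose KA *v x) \<bullet> (M *v (transpose KB *v x))"
    unfolding bilinear inner_matrix_vector_transpose[of _ "transpose M"] transpose_transpose
    by (rule inner_commute)
  then show ?thesis
    unfolding C_F_def quad_form_add_mat quad_form_congruence by (simp add: quad_form_def bilinear)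
qed

lemma sym_mat_C_F: "sym_mat CA \<Longrightarrow> sym_mat CB \<Longrightarrow> sym_mat (C_F CA CB KA KB M)"
  unfolding sym_mat_def C_F_def
  by (simp add: transpose_add matrix_transpose_mul matrix_mul_assoc add_ac)

text \<open>The supremum of \<open>quad_form (C_F (PA + QA) (PB + QB) KA KB M) x\<close> over \<open>M \<in> A_split PA PB\<close>,
  for \<open>a = transpose KA *v x\<close> and \<open>b = transpose KB *v x\<close> (see \<open>conservative_fusion_iff\<close>).\<close>

definition worst_case_variance ::
    "'n::finite mat \<Rightarrow> 'n mat \<Rightarrow> 'n mat \<Rightarrow> 'n mat \<Rightarrow> real^'n \<Rightarrow> real^'n \<Rightarrow> real" where
  "worst_case_variance PA PB QA QB a b
   = quad_form QA a + quad_form QB b + (sqrt (quad_form PA a) + sqrt (quad_form PB b))\<^sup>2"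

lemma conservative_fusion_iff:
  fixes PA PB QA QB :: "real^'n^'n"
  assumes "pd PA" "pd PB" "pd QA" "pd QB"
  shows "conservative_fusion PA PB QA QB KA KB BF \<longleftrightarrow> KA + KB = mat 1 \<and> sym_mat BF \<and>
    (\<forall>x. worst_case_variance PA PB QA QB (transpose KA *v x) (transpose KB *v x) \<le> quad_form BF x)"
proof -
  have sym: "sym_mat (C_F (PA + QA) (PB + QB) KA KB M)" for M
    using assms by (intro sym_mat_C_F sym_mat_add pd_imp_sym_mat)
  have CF: "quad_form (C_F (PA + QA) (PB + QB) KA KB M) x
      = worst_case_variance PA PB QA QB a b
        + 2 * (a \<bullet> (M *v b) - sqrt (quad_form PA a) * sqrt (quad_form PB b))"
    if "a = transpose KA *v x" "b = transpose KB *v x" for M x a b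
    using pd_quad_form_nonneg[OF assms(1), of a] pd_quad_form_nonneg[OF assms(2), of b]
    unfolding quad_form_C_F worst_case_variance_def quad_form_add_mat that[symmetric]
    by (simp add: power2_eq_square algebra_simps)
  have "(\<forall>M\<in>A_split PA PB. \<forall>x. quad_form (C_F (PA + QA) (PB + QB) KA KB M) x \<le> quad_form BF x)
    \<longleftrightarrow> (\<forall>x. worst_case_variance PA PB QA QB (transpose KA *v x) (transpose KB *v x) \<le> quad_form BF x)"
    using A_split_inner_le A_split_inner_attained[OF assms(1,2)] unfolding CF[OF refl refl]
    by (smt (verit, best))
  then show ?thesis
    unfolding conservative_fusion_def using loewner_le_iff_quad_form[OF sym] by blast
qed

section \<open>Split covariance intersection\<close>

lemma inner_le_quad_form_matrix_inv:
  assumes "pd (X::real^'n^'n)"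
  shows "2 * (a \<bullet> w) \<le> quad_form X a + quad_form (matrix_inv X) w"
proof -
  define v where "v = matrix_inv X *v w"
  have Xv: "X *v v = w" unfolding v_def using matrix_inv_mult_vector[OF pd_invertible[OF assms]] .
  have "0 \<le> quad_form X (1 *\<^sub>R a + (-1) *\<^sub>R v)" using pd_quad_form_nonneg[OF assms] .
  also have "\<dots> = quad_form X a - 2 * (a \<bullet> w) + quad_form (matrix_inv X) w"
    unfolding quad_form_lincomb
    using sym_mat_inner_commute[OF pd_imp_sym_mat[OF assms], of v a] Xv
    by (simp add: quad_form_def v_def inner_commute)
  finally show ?thesis by simp
qed

lemma transpose_gains_add: "K + L = mat 1 \<Longrightarrow> transpose K *v x + transpose L *v x = (x::real^'n)"
  by (metis matrix_vector_mult_add_rdistrib matrix_vector_mul_lid transpose_add transpose_mat)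

lemma quad_form_parallel_sum_le:
  fixes X Y K L :: "real^'n^'n"
  assumes X: "pd X" and Y: "pd Y" and KL: "K + L = mat 1"
  shows "quad_form (matrix_inv (matrix_inv X + matrix_inv Y)) x
    \<le> quad_form X (transpose K *v x) + quad_form Y (transpose L *v x)"
proof -
  define S where "S = matrix_inv X + matrix_inv Y"
  have "pd S" unfolding S_def using pd_add pd_matrix_inv X Y by blast
  define w where "w = matrix_inv S *v x"
  have "quad_form (matrix_inv X) w + quad_form (matrix_inv Y) w = quad_form S w"
    unfolding S_def quad_form_add_mat ..
  also have "\<dots> = w \<bullet> x"
    unfolding quad_form_def w_def using matrix_inv_mult_vector[OF pd_invertible[OF \<open>pd S\<close>]] by simp
  finally have "quad_form (matrix_inv X) w + quad_form (matrix_inv Y) w = w \<bullet> x" .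
  moreover have "(transpose K *v x) \<bullet> w + (transpose L *v x) \<bullet> w = w \<bullet> x"
    using transpose_gains_add[OF KL, of x] by (metis inner_add_left inner_commute)
  moreover have "quad_form (matrix_inv S) x = w \<bullet> x"
    unfolding quad_form_def w_def by (rule inner_commute)
  ultimately show ?thesis
    using inner_le_quad_form_matrix_inv[OF X, of "transpose K *v x" w]
      inner_le_quad_form_matrix_inv[OF Y, of "transpose L *v x" w]
    unfolding S_def[symmetric] by linarith
qed

lemma quad_form_parallel_sum_attained:
  fixes X Y :: "real^'n^'n"
  assumes X: "pd X" and Y: "pd Y"
  defines "F \<equiv> matrix_inv (matrix_inv X + matrix_inv Y)"
  shows "pd F" and "F ** matrix_inv X + F ** matrix_inv Y = mat 1"
    and "quad_form X (transpose (F ** matrix_inv X) *v x)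
      + quad_form Y (transpose (F ** matrix_inv Y) *v x) = quad_form F x"
proof -
  define S where "S = matrix_inv X + matrix_inv Y"
  have S: "pd S" unfolding S_def using pd_add pd_matrix_inv X Y by blast
  show "pd F" unfolding F_def S_def[symmetric] using pd_matrix_inv[OF S] .
  show "F ** matrix_inv X + F ** matrix_inv Y = mat 1"
    unfolding matrix_add_ldistrib[symmetric] F_def S_def[symmetric]
    using matrix_inv_left[OF pd_invertible[OF S]] .
  have sym: "transpose F = F" "transpose (matrix_inv X) = matrix_inv X"
      "transpose (matrix_inv Y) = matrix_inv Y"
    using \<open>pd F\<close> pd_matrix_inv[OF X] pd_matrix_inv[OF Y]
    by (auto dest!: pd_imp_sym_mat simp: sym_mat_def)
  define w where "w = F *v x"
  have "transpose (F ** matrix_inv X) *v x = matrix_inv X *v w"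
    "transpose (F ** matrix_inv Y) *v x = matrix_inv Y *v w"
    unfolding matrix_transpose_mul sym w_def by (simp_all add: matrix_vector_mul_assoc)
  moreover have "quad_form X (matrix_inv X *v w) = quad_form (matrix_inv X) w"
    "quad_form Y (matrix_inv Y *v w) = quad_form (matrix_inv Y) w"
    using matrix_inv_mult_vector[OF pd_invertible[OF X]]
      matrix_inv_mult_vector[OF pd_invertible[OF Y]]
    by (simp_all add: quad_form_def inner_commute)
  moreover have "quad_form (matrix_inv X) w + quad_form (matrix_inv Y) w = quad_form S w"
    unfolding S_def quad_form_add_mat ..
  moreover have "quad_form S w = w \<bullet> x"
    unfolding quad_form_def w_def F_def S_def[symmetric]
    using matrix_inv_mult_vector[OF pd_invertible[OF S]] by simp
  moreover have "w \<bullet> x = quad_form F x"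
    unfolding quad_form_def w_def by (rule inner_commute)
  ultimately show "quad_form X (transpose (F ** matrix_inv X) *v x)
      + quad_form Y (transpose (F ** matrix_inv Y) *v x) = quad_form F x" by simp
qed

lemma B_SCI_0: "pd PB \<Longrightarrow> pd QB \<Longrightarrow> B_SCI PA PB QA QB 0 = PB + QB"
  unfolding B_SCI_def by (simp add: matrix_inv_matrix_inv pd_invertible pd_add)

lemma B_SCI_1: "pd PA \<Longrightarrow> pd QA \<Longrightarrow> B_SCI PA PB QA QB 1 = PA + QA"
  unfolding B_SCI_def by (simp add: matrix_inv_matrix_inv pd_invertible pd_add)

lemma B_SCI_parallel_sum:
  fixes PA PB QA QB :: "real^'n^'n"
  assumes "pd PA" "pd PB" "pd QA" "pd QB" and w: "0 < w" "w < 1"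
  shows "B_SCI PA PB QA QB w = matrix_inv (matrix_inv ((1 / w) *\<^sub>R PA + QA)
    + matrix_inv ((1 / (1 - w)) *\<^sub>R PB + QB))"
proof -
  have "matrix_inv ((1 / c) *\<^sub>R P + Q) = c *\<^sub>R matrix_inv (P + c *\<^sub>R Q)"
    if "pd P" "pd Q" "0 < c" for P Q :: "real^'n^'n" and c :: real
  proof -
    have "(1 / c) *\<^sub>R P + Q = (1 / c) *\<^sub>R (P + c *\<^sub>R Q)" using \<open>0 < c\<close> by (simp add: algebra_simps)
    then show ?thesis
      using that by (simp add: matrix_inv_scaleR pd_invertible pd_add pd_scaleR)
  qed
  then show ?thesis unfolding B_SCI_def using assms by simp
qed

lemma pd_B_SCI:
  assumes "pd PA" "pd PB" "pd QA" "pd QB" "w \<in> {0..1}"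
  shows "pd (B_SCI PA PB QA QB w)"
proof -
  consider "w = 0" | "w = 1" | "0 < w" "w < 1" using assms(5) by fastforce
  then show ?thesis
  proof cases
    case 3
    then show ?thesis
      unfolding B_SCI_parallel_sum[OF assms(1-4) 3] using assms
      by (intro pd_matrix_inv pd_add pd_scaleR) simp_all
  next
    case 1
    then show ?thesis using B_SCI_0[OF assms(2,4)] pd_add[OF assms(2,4)] by simp
  next
    case 2
    then show ?thesis using B_SCI_1[OF assms(1,3)] pd_add[OF assms(1,3)] by simp
  qed
qed

lemma conservative_fusion_B_SCI_interior:
  fixes PA PB QA QB :: "real^'n^'n"
  assumes PA: "pd PA" and PB: "pd PB" and QA: "pd QA" and QB: "pd QB" and w: "0 < w" "w < 1"
  shows "\<exists>KA KB. conservative_fusion PA PB QA QB KA KB (B_SCI PA PB QA QB w)"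
proof -
  define X Y where "X = (1 / w) *\<^sub>R PA + QA" and "Y = (1 / (1 - w)) *\<^sub>R PB + QB"
  have X: "pd X" and Y: "pd Y"
    using w PA PB QA QB by (auto simp: X_def Y_def intro!: pd_add pd_scaleR)
  define F where "F = matrix_inv (matrix_inv X + matrix_inv Y)"
  note F = quad_form_parallel_sum_attained[OF X Y, folded F_def]
  have "worst_case_variance PA PB QA QB a b \<le> quad_form X a + quad_form Y b" for a b
  proof -
    have "(sqrt (quad_form PA a) + sqrt (quad_form PB b))\<^sup>2
        \<le> quad_form PA a / w + quad_form PB b / (1 - w)"
      using power2_add_le_weighted[OF w, of "sqrt (quad_form PA a)" "sqrt (quad_form PB b)"]
        pd_quad_form_nonneg[OF PA, of a] pd_quad_form_nonneg[OF PB, of b] by simp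
    then show ?thesis
      unfolding worst_case_variance_def X_def Y_def quad_form_add_mat quad_form_scaleR_mat by simp
  qed
  then have "conservative_fusion PA PB QA QB (F ** matrix_inv X) (F ** matrix_inv Y) F"
    unfolding conservative_fusion_iff[OF PA PB QA QB] using F pd_imp_sym_mat by metis
  moreover have "B_SCI PA PB QA QB w = F"
    unfolding B_SCI_parallel_sum[OF PA PB QA QB w] F_def X_def Y_def ..
  ultimately show ?thesis by metis
qed

lemma conservative_fusion_B_SCI:
  fixes PA PB QA QB :: "real^'n^'n"
  assumes PA: "pd PA" and PB: "pd PB" and QA: "pd QA" and QB: "pd QB" and w: "w \<in> {0..1}"
  shows "\<exists>KA KB. conservative_fusion PA PB QA QB KA KB (B_SCI PA PB QA QB w)"
proof -
  note iff = conservative_fusion_iff[OF PA PB QA QB]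
  have sym: "sym_mat (B_SCI PA PB QA QB w)" using pd_B_SCI[OF assms] by (rule pd_imp_sym_mat)
  consider "w = 0" | "w = 1" | "0 < w" "w < 1" using w by fastforce
  then show ?thesis
  proof cases
    case 1
    have "conservative_fusion PA PB QA QB 0 (mat 1) (B_SCI PA PB QA QB w)"
      unfolding iff using sym PB
      by (simp add: 1 B_SCI_0[OF PB QB] worst_case_variance_def quad_form_add_mat pd_quad_form_nonneg)
    then show ?thesis by blast
  next
    case 2
    have "conservative_fusion PA PB QA QB (mat 1) 0 (B_SCI PA PB QA QB w)"
      unfolding iff using sym PA
      by (simp add: 2 B_SCI_1[OF PA QA] worst_case_variance_def quad_form_add_mat pd_quad_form_nonneg)
    then show ?thesis by blast
  qed (rule conservative_fusion_B_SCI_interior[OF PA PB QA QB])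
qed

lemma psd_conservative_fusion:
  fixes PA PB QA QB :: "real^'n^'n"
  assumes "pd PA" "pd PB" "pd QA" "pd QB" and "conservative_fusion PA PB QA QB KA KB BF"
  shows "psd BF"
proof -
  have "0 \<le> worst_case_variance PA PB QA QB a b" for a b
    using assms(3,4) by (simp add: worst_case_variance_def pd_quad_form_nonneg)
  then show ?thesis
    using assms unfolding conservative_fusion_iff[OF assms(1-4)] psd_iff_quad_form
    by (meson order_trans)
qed

lemma quad_form_B_SCI_le:
  fixes PA PB QA QB :: "real^'n^'n"
  assumes PA: "pd PA" and PB: "pd PB" and QA: "pd QA" and QB: "pd QB"
    and w: "0 < w" "w < 1" and KK: "KA + KB = mat 1"
  shows "quad_form (B_SCI PA PB QA QB w) x
    \<le> quad_form PA (transpose KA *v x) / w + quad_form PB (transpose KB *v x) / (1 - w)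
      + quad_form QA (transpose KA *v x) + quad_form QB (transpose KB *v x)"
proof -
  have "quad_form (B_SCI PA PB QA QB w) x
    \<le> quad_form ((1 / w) *\<^sub>R PA + QA) (transpose KA *v x)
      + quad_form ((1 / (1 - w)) *\<^sub>R PB + QB) (transpose KB *v x)"
    unfolding B_SCI_parallel_sum[OF PA PB QA QB w] using w PA PB QA QB
    by (intro quad_form_parallel_sum_le KK pd_add pd_scaleR) simp_all
  then show ?thesis unfolding quad_form_add_mat quad_form_scaleR_mat by simp
qed

lemma conservative_fusion_ex_ci_weight:
  fixes PA PB QA QB :: "real^'n^'n"
  assumes PA: "pd PA" and PB: "pd PB" and QA: "pd QA" and QB: "pd QB"
    and "conservative_fusion PA PB QA QB KA KB BF"
  shows "\<exists>w\<in>{0..1}. \<forall>x. 0 \<le> ci_margin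
    (quad_form BF x - quad_form QA (transpose KA *v x) - quad_form QB (transpose KB *v x))
    (quad_form PA (transpose KA *v x)) (quad_form PB (transpose KB *v x)) w"
proof -
  define R where "R = BF - KA ** QA ** transpose KA - KB ** QB ** transpose KB"
  define A B where "A = KA ** PA ** transpose KA" and "B = KB ** PB ** transpose KB"
  have qR: "quad_form R x
      = quad_form BF x - quad_form QA (transpose KA *v x) - quad_form QB (transpose KB *v x)"
    and qA: "quad_form A x = quad_form PA (transpose KA *v x)"
    and qB: "quad_form B x = quad_form PB (transpose KB *v x)" for x
    unfolding R_def A_def B_def quad_form_diff_mat quad_form_congruence by simp_all
  have H: "worst_case_variance PA PB QA QB (transpose KA *v x) (transpose KB *v x) \<le> quad_form BF x"
    for x using assms(5) unfolding conservative_fusion_iff[OF PA PB QA QB] by blast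
  have "(sqrt (quad_form A x) + sqrt (quad_form B x))\<^sup>2 \<le> quad_form R x" for x
    using H[of x] unfolding qR qA qB worst_case_variance_def by simp
  then show ?thesis
    using ex_weight_ci_margin_nonneg[of A B R] pd_quad_form_nonneg PA PB unfolding qR qA qB by blast
qed

lemma ex_B_SCI_loewner_le:
  fixes PA PB QA QB :: "real^'n^'n"
  assumes PA: "pd PA" and PB: "pd PB" and QA: "pd QA" and QB: "pd QB"
    and cf: "conservative_fusion PA PB QA QB KA KB BF"
  shows "\<exists>w\<in>{0..1}. loewner_le (B_SCI PA PB QA QB w) BF"
proof -
  have KK: "KA + KB = mat 1" and BF: "sym_mat BF"
    and H: "\<And>x. worst_case_variance PA PB QA QB (transpose KA *v x) (transpose KB *v x)
      \<le> quad_form BF x"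
    using cf unfolding conservative_fusion_iff[OF PA PB QA QB] by auto
  obtain w where w: "w \<in> {0..1}" and margin: "\<And>x. 0 \<le> ci_margin
    (quad_form BF x - quad_form QA (transpose KA *v x) - quad_form QB (transpose KB *v x))
    (quad_form PA (transpose KA *v x)) (quad_form PB (transpose KB *v x)) w"
    using conservative_fusion_ex_ci_weight[OF assms] by blast
  have "quad_form (B_SCI PA PB QA QB w) x \<le> quad_form BF x" for x
  proof -
    consider "w = 0" | "w = 1" | "0 < w" "w < 1" using w by fastforce
    then show ?thesis
    proof cases
      case 1
      then have "transpose KA *v x = 0"
        using margin[of x] pd_quad_form_nonneg[OF PA, of "transpose KA *v x"] PA
        by (simp add: ci_margin_def pd_quad_form_eq_0)
      then show ?thesis
        using H[of x] transpose_gains_add[OF KK, of x] unfolding 1 B_SCI_0[OF PB QB]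
        by (simp add: worst_case_variance_def quad_form_add_mat pd_quad_form_nonneg PB)
    next
      case 2
      then have "transpose KB *v x = 0"
        using margin[of x] pd_quad_form_nonneg[OF PB, of "transpose KB *v x"] PB
        by (simp add: ci_margin_def pd_quad_form_eq_0)
      then show ?thesis
        using H[of x] transpose_gains_add[OF KK, of x] unfolding 2 B_SCI_1[OF PA QA]
        by (simp add: worst_case_variance_def quad_form_add_mat pd_quad_form_nonneg PA)
    next
      case 3
      show ?thesis
        using quad_form_B_SCI_le[OF PA PB QA QB 3 KK, of x] ci_margin_nonneg_imp_le[OF 3 margin[of x]]
        by simp
    qed
  qed
  then show ?thesis
    using w loewner_le_iff_quad_form[OF pd_imp_sym_mat[OF pd_B_SCI[OF PA PB QA QB w]] BF] by blast
qed

lemma optimal_fusion_iff_le_B_SCI: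
  fixes PA PB QA QB :: "real^'n^'n"
  assumes PD: "pd PA" "pd PB" "pd QA" "pd QB" and J: "increasing_cost J"
    and cf: "conservative_fusion PA PB QA QB KA KB BF"
  shows "optimal_fusion J PA PB QA QB KA KB BF \<longleftrightarrow> (\<forall>w\<in>{0..1}. J BF \<le> J (B_SCI PA PB QA QB w))"
proof
  assume "optimal_fusion J PA PB QA QB KA KB BF"
  then show "\<forall>w\<in>{0..1}. J BF \<le> J (B_SCI PA PB QA QB w)"
    using conservative_fusion_B_SCI[OF PD] unfolding optimal_fusion_def by blast
next
  assume le: "\<forall>w\<in>{0..1}. J BF \<le> J (B_SCI PA PB QA QB w)"
  have "J BF \<le> J BF'" if cf': "conservative_fusion PA PB QA QB KA' KB' BF'" for KA' KB' BF'
  proof -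
    obtain w where w: "w \<in> {0..1}" "loewner_le (B_SCI PA PB QA QB w) BF'"
      using ex_B_SCI_loewner_le[OF PD cf'] by blast
    then have "J (B_SCI PA PB QA QB w) \<le> J BF'"
      using J psd_conservative_fusion[OF PD cf'] pd_imp_psd[OF pd_B_SCI[OF PD w(1)]]
      unfolding increasing_cost_def by blast
    then show ?thesis using le w(1) by force
  qed
  then show "optimal_fusion J PA PB QA QB KA KB BF" using cf unfolding optimal_fusion_def by blast
qed

theorem theorem1:
  fixes PA PB QA QB KA KB BF :: "real^'n^'n"
    and J :: "real^'n^'n \<Rightarrow> real"
  assumes "pd PA" and "pd PB" and "pd QA" and "pd QB"
    and "increasing_cost J"
    and "conservative_fusion PA PB QA QB KA KB BF"
  shows "optimal_fusion J PA PB QA QB KA KB BF \<longleftrightarrow>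
    (\<exists>\<omega>s \<in> {0..1}. (\<forall>\<omega> \<in> {0..1}. J (B_SCI PA PB QA QB \<omega>s) \<le> J (B_SCI PA PB QA QB \<omega>))
        \<and> BF = B_SCI PA PB QA QB \<omega>s)"
proof -
  let ?S = "B_SCI PA PB QA QB"
  obtain w where w: "w \<in> {0..1}" "loewner_le (?S w) BF"
    using ex_B_SCI_loewner_le[OF assms(1-4,6)] by blast
  have "BF = ?S w" if le: "\<forall>\<omega>\<in>{0..1}. J BF \<le> J (?S \<omega>)"
  proof (rule ccontr)
    assume "BF \<noteq> ?S w"
    then have "J (?S w) < J BF"
      using assms(5) w psd_conservative_fusion[OF assms(1-4,6)]
        pd_imp_psd[OF pd_B_SCI[OF assms(1-4) w(1)]]
      unfolding increasing_cost_def by metis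
    then show False using le w(1) by force
  qed
  then show ?thesis using optimal_fusion_iff_le_B_SCI[OF assms] w(1) by (auto intro!: bexI[of _ w])
qed

end
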